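(* For any coprime $r>1$ and $0<a<r$, on the Danilov resolution of $\frac1r(1,a,r-a)$ one has $X_i=D_X+R_i-R_{i+1}$ for all $i=0,\dots,r-1$ (indices mod $r$).
   Context: Notation: for integers $s$ and $t>0$, $\langle s\rangle_t$ is the least non-negative integer congruent to $s$ modulo $t$. A pair of integers $(r,a)$ is admissible if $r\ge1$, $0\le a<r$, $\gcd(r,a)=1$ (so $a=0$ only for $r=1$). For admissible $(r,a)$ put $N(r,a)=\mathbb Z^3+\mathbb Z\cdot\frac1r(1,a,r-a)\subset\mathbb Q^3$; $e_1,e_2,e_3$ is the standard basis, $e_j^*$ the $j$-th coordinate function, and $\Delta(r,a)$ the cone spanned by $e_1,e_2,e_3$. Let $b$ be an inverse of $a$ modulo $r$ and $p_i=\frac1r(\langle -ib\rangle_r,r-i,i)$, $i=0,\dots,r$ (so $p_0=e_2$, $p_r=e_3$, $p_{r-a}=\frac1r(1,a,r-a)$). For $r>1$ let $(r_L,a_L)=(r-a,\langle r\rangle_{r-a})$, $(r_R,a_R)=(a,\langle -r\rangle_a)$; there are lattice isomorphisms $L:N(r_L,a_L)\to N(r,a)$, $R:N(r_R,a_R)\to N(r,a)$ with $L(e_1)=e_1$, $L(e_2)=e_2$, $L(e_3)=p_{r-a}$, $R(e_1)=e_1$, $R(e_2)=p_{r-a}$, $R(e_3)=e_3$. The Danilov fan $\Sigma(r,a)$ is defined recursively: $\Sigma(1,0)$ is $\Delta(1,0)$ with its faces; for $r>1$, $\Sigma(r,a)$ consists of the cone spanned by $e_2,e_3,p_{r-a}$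 with its faces, together with $L(\Sigma(r_L,a_L))$ and $R(\Sigma(r_R,a_R))$. The Danilov resolution $Y$ is the smooth toric variety of $\Sigma(r,a)$, with torus $T$; its rays are spanned by $e_1,p_0,\dots,p_r$; $D_i$ is the $T$-invariant prime divisor of the ray through $p_i$ and $E_j$ that of $e_j$. The permutation $\tau(r,a,\cdot)$ of $\{0,\dots,r-1\}$: if $a\in\{1,r-1\}$, $\tau(r,a,i)=\langle ai-1\rangle_r$; otherwise $\tau(r,a,i)=\tau(r-a,\langle r\rangle_{r-a},\langle i\rangle_{r-a})$ for $i\ge a$ and $\tau(r,a,i)=(r-a)+\tau(a,\langle -r\rangle_a,i)$ for $i<a$. With indices mod $r$, on $Y$ define $Z_i=\sum_{k=\tau(r,a,i)+1}^{r}D_k$ ($i=0,\dots,r-1$) and let $X_0,\dots,X_{r-1}$ be the unique divisors with $X_0=E_1$ and $X_i+Z_{i+1}=Z_i+X_{i-a}$ for all $i$. Define the $\mathbb Q$-divisors $D_X=E_1+\sum_{i=0}^r e_1^*(p_i)D_i$, $D_Z=\sum_{i=0}^r e_3^*(p_i)D_i$, and let $R_0,\dots,R_{r-1}$ be the unique $\mathbb Q$-divisors with $R_0=0$ and $Z_i=D_Z+R_i-R_{i-a}$ for all $i$. *)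

theory Defs
  imports Complex_Main "HOL-Number_Theory.Cong" "HOL-Library.Function_Algebras"
begin

definition admissible :: "int \<Rightarrow> int \<Rightarrow> bool" where
  "admissible r a \<longleftrightarrow> 1 \<le> r \<and> 0 \<le> a \<and> a < r \<and> coprime r a"

text \<open>An inverse b of a modulo r (the data below does not depend on the choice).\<close>
definition binv :: "int \<Rightarrow> int \<Rightarrow> int" where
  "binv r a = (SOME b. [a * b = 1] (mod r))"

definition pt :: "int \<Rightarrow> int \<Rightarrow> int \<Rightarrow> rat \<times> rat \<times> rat" where
  "pt r a i = (of_int ((- i * binv r a) mod r) / of_int r,
               of_int (r - i) / of_int r, of_int i / of_int r)"

definition e1star :: "rat \<times> rat \<times> rat \<Rightarrow> rat" where "e1star v = fst v"
definition e2star :: "rat \<times> rat \<times> rat \<Rightarrow> rat" where "e2star v = fst (snd v)"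
definition e3star :: "rat \<times> rat \<times> rat \<Rightarrow> rat" where "e3star v = snd (snd v)"

text \<open>The permutation tau(r,a,.) of {0..r-1} (values on non-admissible input are junk).\<close>
function tau :: "int \<Rightarrow> int \<Rightarrow> int \<Rightarrow> int" where
  "tau r a i =
     (if r \<le> 1 \<or> a \<le> 0 \<or> r \<le> a \<or> a = 1 \<or> a = r - 1 then (a * i - 1) mod r
      else if a \<le> i then tau (r - a) (r mod (r - a)) (i mod (r - a))
      else (r - a) + tau a ((- r) mod a) i)"
  by pat_completeness auto
termination
  by (relation "measure (\<lambda>(r, a, i). nat r)") auto

text \<open>The rays of the Danilov fan are spanned by e_1 and p_0, ..., p_r. A T-invariant
  (Q-)divisor on Y is a formal (Q-)linear combination of the T-invariant prime divisors,
  i.e. a function from the rays to int (resp. rat). \<open>RE1\<close> is the ray of e_1 (divisor E_1),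
  \<open>RD k\<close> the ray through p_k (divisor D_k), 0 \<le> k \<le> r.\<close>
datatype ray = RE1 | RD int

type_synonym divisor = "ray \<Rightarrow> int"
type_synonym qdivisor = "ray \<Rightarrow> rat"

definition prime_div :: "ray \<Rightarrow> ray \<Rightarrow> 'a::zero_neq_one" where
  "prime_div \<rho> = (\<lambda>\<sigma>. if \<sigma> = \<rho> then 1 else 0)"

abbreviation E1 :: "ray \<Rightarrow> 'a::zero_neq_one" where "E1 \<equiv> prime_div RE1"
abbreviation Dv :: "int \<Rightarrow> ray \<Rightarrow> 'a::zero_neq_one" where "Dv k \<equiv> prime_div (RD k)"

definition qdiv_of :: "divisor \<Rightarrow> qdivisor" where
  "qdiv_of X = (\<lambda>\<rho>. of_int (X \<rho>))"

definition smul :: "rat \<Rightarrow> qdivisor \<Rightarrow> qdivisor" where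
  "smul c D = (\<lambda>\<rho>. c * D \<rho>)"

definition Zdiv :: "int \<Rightarrow> int \<Rightarrow> int \<Rightarrow> divisor" where
  "Zdiv r a i = (\<Sum>k\<in>{tau r a (i mod r) + 1 .. r}. Dv k)"

definition Xdiv :: "int \<Rightarrow> int \<Rightarrow> int \<Rightarrow> divisor" where
  "Xdiv r a = (THE X. (\<forall>i. X i = X (i mod r)) \<and> X 0 = E1 \<and>
      (\<forall>i. X i + Zdiv r a (i + 1) = Zdiv r a i + X (i - a)))"

definition DXdiv :: "int \<Rightarrow> int \<Rightarrow> qdivisor" where
  "DXdiv r a = E1 + (\<Sum>i\<in>{0..r}. smul (e1star (pt r a i)) (Dv i))"

definition DZdiv :: "int \<Rightarrow> int \<Rightarrow> qdivisor" where
  "DZdiv r a = (\<Sum>i\<in>{0..r}. smul (e3star (pt r a i)) (Dv i))"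

definition Rdiv :: "int \<Rightarrow> int \<Rightarrow> int \<Rightarrow> qdivisor" where
  "Rdiv r a = (THE R. (\<forall>i. R i = R (i mod r)) \<and> R 0 = 0 \<and>
      (\<forall>i. qdiv_of (Zdiv r a i) = DZdiv r a + R i - R (i - a)))"

end

theory Submission
  imports Defs
begin

text \<open>
  Both X and R solve difference equations \<open>F i - F (i - a) = g i\<close> along the cycle of
  \<open>i \<mapsto> i + a\<close> modulo r: such an equation has exactly one r-periodic solution with prescribed
  \<open>F 0\<close> as soon as g sums to zero over a period. Hence
  \<open>D i = X i - (D_X + R i - R (i + 1))\<close> satisfies \<open>D i = D (i - a)\<close>, so D is constant, and it
  remains to see \<open>R 1 = D_X - E_1\<close>.

  With b the inverse of a modulo r, \<open>R 1 = \<Sum>m=1..b. (Z (m a) - D_Z)\<close>, and the coefficient of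
  \<open>D_k\<close> is \<open>#{m \<le> b. \<tau>(m a) < k} - k b / r\<close>. Put \<open>\<chi> x = \<lceil>x b / r\<rceil> - \<lceil>(x - 1) b / r\<rceil> \<in> {0, 1}\<close>
  (\<open>ceil_step r b x\<close>): the residues \<open>m a mod r\<close>, \<open>1 \<le> m \<le> b\<close>, are exactly those x with \<open>\<chi> x = 1\<close>, and
  \<open>\<chi> (\<tau> x + 1) = \<chi> x\<close>, proved along the recursion defining \<open>\<tau>\<close>. Since \<open>\<tau>\<close> is a permutation,
  the count telescopes to \<open>\<lceil>k b / r\<rceil>\<close>, and \<open>\<lceil>k b / r\<rceil> - k b / r = \<langle>-k b\<rangle>_r / r = e_1^*(p_k)\<close>.
\<close>

section \<open>Ceiling quotients\<close>

definition ceil_div :: "int \<Rightarrow> int \<Rightarrow> int" where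
  "ceil_div n r = \<lceil>(of_int n :: rat) / of_int r\<rceil>"

lemma ceil_div_le_iff: "0 < r \<Longrightarrow> ceil_div n r \<le> N \<longleftrightarrow> n \<le> N * r"
  by (simp add: ceil_div_def ceiling_le_iff pos_divide_le_eq flip: of_int_mult)

lemma ceil_div_eqI: "0 < r \<Longrightarrow> (N - 1) * r < n \<Longrightarrow> n \<le> N * r \<Longrightarrow> ceil_div n r = N"
  unfolding ceil_div_def
proof (rule ceiling_unique)
  assume "0 < r" "(N - 1) * r < n" "n \<le> N * r"
  then have "of_int ((N - 1) * r) < (of_int n :: rat)" "(of_int n :: rat) \<le> of_int (N * r)"
    by (simp_all only: of_int_less_iff of_int_le_iff)
  with \<open>0 < r\<close> show "of_int N - 1 < (of_int n :: rat) / of_int r" "(of_int n :: rat) / of_int r \<le> of_int N"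
    by (simp_all add: pos_divide_le_eq pos_less_divide_eq)
qed

lemma of_int_ceil_div: "0 < r \<Longrightarrow> of_int (ceil_div n r) = (of_int n + of_int ((- n) mod r)) / (of_int r :: rat)"
proof -
  assume r: "0 < r"
  have "- (of_int n / of_int r) = (of_int (- n) / of_int r :: rat)" by simp
  then have "ceil_div n r = - ((- n) div r)"
    unfolding ceil_div_def ceiling_def by (simp only: floor_divide_of_int_eq)
  then have "ceil_div n r * r = n + (- n) mod r"
    using div_mult_mod_eq[of "- n" r] by (smt (verit) mult_minus_left)
  then have "of_int (ceil_div n r * r) = (of_int (n + (- n) mod r) :: rat)"
    by (simp only:)
  with r show ?thesis by (simp add: eq_divide_eq)
qed

text \<open>If \<open>b s - c r = 1\<close>, then \<open>x b / r\<close> and \<open>x c / s\<close> differ by \<open>x / (r s)\<close>, too little for an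
  integer to lie between them while x stays in the window.\<close>

lemma ceil_div_eq_of_det:
  assumes r: "0 < r" and s: "0 < s" and det: "b * s - c * r = 1"
    and x: "1 - r \<le> x" "x \<le> s - 1"
  shows "ceil_div (x * b) r = ceil_div (x * c) s"
proof -
  have "x * b \<le> N * r \<longleftrightarrow> x * c \<le> N * s" for N
  proof -
    define u v where "u = x * b - N * r" and "v = x * c - N * s"
    have x_eq: "x = s * u - r * v"
      unfolding u_def v_def using det by algebra
    have "v \<le> 0" if "u \<le> 0"
    proof (rule ccontr)
      assume "\<not> v \<le> 0"
      then have "r \<le> r * v" using r by simp
      moreover have "s * u \<le> 0" using s \<open>u \<le> 0\<close> by (simp add: mult_nonneg_nonpos)
      ultimately show False using x x_eq by linarith
    qed
    moreover have "u \<le> 0" if "v \<le> 0"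
    proof (rule ccontr)
      assume "\<not> u \<le> 0"
      then have "s \<le> s * u" using s by simp
      moreover have "r * v \<le> 0" using r \<open>v \<le> 0\<close> by (simp add: mult_nonneg_nonpos)
      ultimately show False using x x_eq by linarith
    qed
    ultimately show ?thesis unfolding u_def v_def by linarith
  qed
  then show ?thesis
    using ceil_div_le_iff[OF r, of "x * b"] ceil_div_le_iff[OF s, of "x * c"]
    by (metis order.antisym order.refl)
qed

definition ceil_step :: "int \<Rightarrow> int \<Rightarrow> int \<Rightarrow> int" where
  "ceil_step r b x = ceil_div (x * b) r - ceil_div ((x - 1) * b) r"

lemma ceil_step_eq_of_det:
  assumes "0 < r" "0 < s" "b * s - c * r = 1" "2 - r \<le> x" "x \<le> s - 1"
  shows "ceil_step r b x = ceil_step s c x"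
  unfolding ceil_step_def
  using ceil_div_eq_of_det[OF assms(1-3), of x] ceil_div_eq_of_det[OF assms(1-3), of "x - 1"] assms(4,5)
  by simp

lemma ceil_step_eq:
  assumes "0 < b" "b \<le> r"
  shows "ceil_step r b x = (if (x * b - 1) mod r < b then 1 else 0)"
proof -
  have r: "0 < r" using assms by simp
  define Q s where "Q = (x * b - 1) div r" and "s = (x * b - 1) mod r"
  have s: "0 \<le> s" "s < r" and xb: "x * b = Q * r + s + 1"
    unfolding Q_def s_def using r by simp_all
  have "ceil_div (x * b) r = Q + 1"
    by (rule ceil_div_eqI) (use r s xb in \<open>simp_all add: algebra_simps\<close>)
  moreover have "ceil_div ((x - 1) * b) r = (if s < b then Q else Q + 1)"
    by (rule ceil_div_eqI) (use r s xb assms in \<open>auto simp: algebra_simps\<close>)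
  ultimately show ?thesis unfolding ceil_step_def s_def by simp
qed

lemma ceil_step_cong:
  assumes "0 < b" "b \<le> r" "x mod r = y mod r"
  shows "ceil_step r b x = ceil_step r b y"
proof -
  have "(x * b - 1) mod r = (y * b - 1) mod r"
    by (metis assms(3) mod_diff_left_eq mod_mult_left_eq)
  then show ?thesis using ceil_step_eq[OF assms(1,2)] by presburger
qed

lemma mod_eq_pred_iff:
  assumes "0 < (r::int)"
  shows "y mod r = r - 1 \<longleftrightarrow> r dvd (y + 1)"
proof -
  have m: "0 \<le> y mod r" "y mod r < r" using assms by simp_all
  have "(y + 1) mod r = (y mod r + 1) mod r" by (simp add: mod_add_left_eq)
  also have "\<dots> = (if y mod r = r - 1 then 0 else y mod r + 1)"
    using m by (auto intro: mod_pos_pos_trivial)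
  finally show ?thesis using m by (auto simp: dvd_eq_mod_eq_0)
qed

lemma ceil_step_pred_uminus:
  assumes "1 < r"
  shows "ceil_step r (r - 1) (- x) = ceil_step r (r - 1) x"
proof -
  have "- x * (r - 1) - 1 = (x - 1) + (- x) * r" "x * (r - 1) - 1 = (- x - 1) + x * r"
    by (simp_all add: algebra_simps)
  then have "(- x * (r - 1) - 1) mod r = (x - 1) mod r" "(x * (r - 1) - 1) mod r = (- x - 1) mod r"
    by (simp_all only: mod_mult_self1)
  moreover have "(x - 1) mod r < r - 1 \<longleftrightarrow> (- x - 1) mod r < r - 1"
  proof -
    have "(x - 1) mod r \<le> r - 1" "(- x - 1) mod r \<le> r - 1" using assms by simp_all
    moreover have "(x - 1) mod r = r - 1 \<longleftrightarrow> (- x - 1) mod r = r - 1"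
      using mod_eq_pred_iff[of r] assms by simp
    ultimately show ?thesis by linarith
  qed
  ultimately show ?thesis using assms by (simp add: ceil_step_eq)
qed

section \<open>The permutation \<open>\<tau>\<close>\<close>

declare tau.simps [simp del]

lemma tau_base: "r \<le> 1 \<or> a = 1 \<or> a = r - 1 \<Longrightarrow> tau r a i = (a * i - 1) mod r"
  by (subst tau.simps) auto

lemma tau_left:
  "1 < a \<Longrightarrow> a < r - 1 \<Longrightarrow> a \<le> i \<Longrightarrow> tau r a i = tau (r - a) (r mod (r - a)) (i mod (r - a))"
  by (subst tau.simps) auto

lemma tau_right:
  "1 < a \<Longrightarrow> a < r - 1 \<Longrightarrow> i < a \<Longrightarrow> tau r a i = r - a + tau a ((- r) mod a) i"
  by (subst tau.simps) auto

lemma admissible_left: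
  assumes "admissible r a" "0 < a"
  shows "admissible (r - a) (r mod (r - a))"
proof -
  have "r mod (r - a) = (a + (r - a)) mod (r - a)" by simp
  also have "\<dots> = a mod (r - a)" by (rule mod_add_self2)
  moreover have "r - a \<noteq> 0" using assms unfolding admissible_def by simp
  ultimately have "coprime (r - a) (r mod (r - a)) \<longleftrightarrow> coprime (r - a) a"
    by (simp add: coprime_mod_right_iff)
  moreover have "coprime (r - a) a"
    using assms coprime_imp_coprime zdvd_zdiffD unfolding admissible_def by blast
  ultimately show ?thesis using assms unfolding admissible_def by simp
qed

lemma admissible_right:
  assumes "admissible r a" "0 < a"
  shows "admissible a ((- r) mod a)"
  using assms unfolding admissible_def
  by (simp add: coprime_mod_right_iff coprime_commute[of a r])

lemma mod_image_interval:
  assumes "0 < (m::int)"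
  shows "(\<lambda>i. i mod m) ` {c..<c + m} = {0..<m}"
proof
  show "(\<lambda>i. i mod m) ` {c..<c + m} \<subseteq> {0..<m}" using assms by auto
  show "{0..<m} \<subseteq> (\<lambda>i. i mod m) ` {c..<c + m}"
  proof
    fix y assume y: "y \<in> {0..<m}"
    have "(c + (y - c) mod m) mod m = y"
      using y by (simp add: mod_add_right_eq)
    moreover have "c + (y - c) mod m \<in> {c..<c + m}" using assms by simp
    ultimately show "y \<in> (\<lambda>i. i mod m) ` {c..<c + m}" by (metis image_eqI)
  qed
qed

lemma inj_on_affine_mod:
  fixes r a :: int
  assumes "coprime r a"
  shows "inj_on (\<lambda>i. (a * i - 1) mod r) {0..<r}"
proof
  fix i j assume ij: "i \<in> {0..<r}" "j \<in> {0..<r}" "(a * i - 1) mod r = (a * j - 1) mod r"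
  then have "[a * i = a * j] (mod r)"
    by (metis cong_def cong_add_rcancel diff_add_cancel)
  then have "[i = j] (mod r)"
    using assms by (metis cong_mult_lcancel coprime_commute)
  then show "i = j" using ij by (simp add: cong_def)
qed

lemma tau_image:
  assumes "admissible r a"
  shows "tau r a ` {0..<r} = {0..<r}"
  using assms
proof (induction "nat r" arbitrary: r a rule: less_induct)
  case less
  have adm: "1 \<le> r" "0 \<le> a" "a < r" "coprime r a"
    using less.prems unfolding admissible_def by auto
  show ?case
  proof (cases "r \<le> 1 \<or> a = 1 \<or> a = r - 1")
    case True
    have "(\<lambda>i. (a * i - 1) mod r) ` {0..<r} = {0..<r}"
      by (rule endo_inj_surj) (use adm inj_on_affine_mod in auto)
    then show ?thesis using tau_base[OF True] by simp
  next
    case False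
    have "a \<noteq> 0" using False adm by auto
    then have a: "1 < a" "a < r - 1" using False adm by auto
    have "tau r a ` {a..<r} = tau (r - a) (r mod (r - a)) ` (\<lambda>i. i mod (r - a)) ` {a..<a + (r - a)}"
      using tau_left[OF a] by (simp add: image_image)
    also have "\<dots> = tau (r - a) (r mod (r - a)) ` {0..<r - a}"
      using a by (simp only: mod_image_interval)
    also have "\<dots> = {0..<r - a}"
      using a admissible_left[OF less.prems] by (intro less.hyps) auto
    finally have left: "tau r a ` {a..<r} = {0..<r - a}" .
    have "tau r a ` {0..<a} = (+) (r - a) ` tau a ((- r) mod a) ` {0..<a}"
      using tau_right[OF a] by (simp add: image_image)
    also have "tau a ((- r) mod a) ` {0..<a} = {0..<a}"
      using a admissible_right[OF less.prems] by (intro less.hyps) auto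
    finally have right: "tau r a ` {0..<a} = {r - a..<r}" by simp
    have "{0..<r} = {0..<a} \<union> {a..<r}" using a by auto
    then have "tau r a ` {0..<r} = {r - a..<r} \<union> {0..<r - a}"
      by (simp only: image_Un left right)
    also have "\<dots> = {0..<r}" using a by auto
    finally show ?thesis .
  qed
qed

lemma tau_range: "admissible r a \<Longrightarrow> i \<in> {0..<r} \<Longrightarrow> tau r a i \<in> {0..<r}"
  using tau_image by blast

lemma tau_bij: "admissible r a \<Longrightarrow> bij_betw (tau r a) {0..<r} {0..<r}"
  by (simp add: bij_betw_def eq_card_imp_inj_on tau_image)

section \<open>Counting along \<open>\<tau>\<close>\<close>

lemma ceil_step_tau_succ_base:
  fixes r a b :: int
  assumes a: "a = 1 \<or> a = r - 1" and b: "0 < b" "b < r" and inv: "(a * b) mod r = 1"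
  shows "ceil_step r b (tau r a i + 1) = ceil_step r b i"
proof -
  have tau_eq: "tau r a i = (a * i - 1) mod r" using a by (intro tau_base) auto
  from a show ?thesis
  proof
    assume "a = 1"
    then have "(tau r a i + 1) mod r = i mod r"
      using tau_eq by (simp add: mod_add_left_eq)
    then show ?thesis using b by (intro ceil_step_cong) auto
  next
    assume a1: "a = r - 1"
    have "(r - 1) * b = - b + b * r" by (simp add: algebra_simps)
    then have "((r - 1) * b) mod r = (- b) mod r" by (simp only: mod_mult_self1)
    also have "\<dots> = r - b" using b by (simp add: zmod_zminus1_eq_if)
    finally have "((r - 1) * b) mod r = r - b" .
    then have b1: "b = r - 1" using inv a1 by simp
    from tau_eq have "tau r a i = ((r - 1) * i - 1) mod r" by (simp only: a1)
    also have "(r - 1) * i - 1 = (- i - 1) + i * r" by (simp add: algebra_simps)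
    finally have "tau r a i = (- i - 1) mod r" by simp
    then have "(tau r a i + 1) mod r = (- i) mod r" by (simp add: mod_add_left_eq)
    then have "ceil_step r b (tau r a i + 1) = ceil_step r b (- i)"
      using b by (intro ceil_step_cong) auto
    then show ?thesis using ceil_step_pred_uminus b b1 by simp
  qed
qed

lemma recursion_inverses:
  fixes r a b :: int
  assumes a: "1 < a" "a < r - 1" and b: "0 < b" "b < r" and inv: "(a * b) mod r = 1"
  obtains q where "a * b - q * r = 1" "0 < q" "q < a" "q < b" "b - q < r - a"
    and "(r mod (r - a) * (b - q)) mod (r - a) = 1" and "((- r) mod a * q) mod a = 1"
proof
  have r: "0 < r" using b by simp
  define q where "q = (a * b) div r"
  show det: "a * b - q * r = 1"
    using inv div_mult_mod_eq[of "a * b" r] unfolding q_def by linarith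
  have "2 * 1 \<le> a * b" using a b by (intro mult_mono) auto
  then have "0 < q * r" using det by linarith
  then show "0 < q" using b by (simp add: zero_less_mult_iff)
  have "a * b < a * r" using a b by simp
  then have "q * r < a * r" using det by linarith
  then show "q < a" using r by (simp add: mult_less_cancel_right)
  have "a * b \<le> r * b" using a b by (intro mult_right_mono) auto
  then have "q * r < b * r" using det by (simp add: algebra_simps)
  then show "q < b" using r by (simp add: mult_less_cancel_right)
  have "(r - a) * b \<le> (r - a) * (r - 1)" using a b by (intro mult_left_mono) auto
  then have "(b - q) * r < (r - a) * r" using det a by (simp add: algebra_simps)
  then show "b - q < r - a" using r by (simp add: mult_less_cancel_right)
  have "(r mod (r - a) * (b - q)) mod (r - a) = (a * (b - q)) mod (r - a)"
    by (metis mod_mult_left_eq mod_add_self2 diff_add_cancel add.commute)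
  also have "a * (b - q) = 1 + q * (r - a)" using det by (simp add: algebra_simps)
  finally show "(r mod (r - a) * (b - q)) mod (r - a) = 1" using a by simp
  have "((- r) mod a * q) mod a = ((- r) * q) mod a" by (simp add: mod_mult_left_eq)
  also have "(- r) * q = 1 + (- b) * a" using det by (simp add: algebra_simps)
  also have "(1 + (- b) * a) mod a = 1 mod a" by (rule mod_mult_self1)
  finally show "((- r) mod a * q) mod a = 1" using a by simp
qed

text \<open>The recursion of \<open>\<tau>\<close> from \<open>(r, a)\<close> to \<open>(r - a, \<langle>r\<rangle>_{r-a})\<close> and \<open>(a, \<langle>-r\<rangle>_a)\<close> is matched
  by inverses \<open>b - q\<close> and \<open>q\<close>, where \<open>a b - q r = 1\<close>; these pairs satisfy the hypothesis of
  \<open>ceil_step_eq_of_det\<close>.\<close>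

lemma ceil_step_tau_succ:
  assumes "admissible r a" "0 \<le> i" "i < r" "0 < b" "b < r" "(a * b) mod r = 1"
  shows "ceil_step r b (tau r a i + 1) = ceil_step r b i"
  using assms
proof (induction r a i arbitrary: b rule: tau.induct)
  case (1 r a i)
  have "a \<noteq> 0" using 1(8) by auto
  then have adm: "0 < a" "a < r" using 1(3) unfolding admissible_def by auto
  show ?case
  proof (cases "a = 1 \<or> a = r - 1")
    case True
    then show ?thesis using 1(6-8) by (rule ceil_step_tau_succ_base)
  next
    case False
    then have a: "1 < a" "a < r - 1" using adm by auto
    then have rec: "\<not> (r \<le> 1 \<or> a \<le> 0 \<or> r \<le> a \<or> a = 1 \<or> a = r - 1)" by auto
    obtain q where q: "a * b - q * r = 1" "0 < q" "q < a" "q < b" "b - q < r - a"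
      and inv_left: "(r mod (r - a) * (b - q)) mod (r - a) = 1" and inv_right: "((- r) mod a * q) mod a = 1"
      using recursion_inverses[OF a 1(6-8)] .
    show ?thesis
    proof (cases "a \<le> i")
      case True
      define t where "t = tau (r - a) (r mod (r - a)) (i mod (r - a))"
      have adm_left: "admissible (r - a) (r mod (r - a))" using admissible_left 1(3) adm by blast
      have t: "0 \<le> t" "t < r - a" using tau_range[OF adm_left] a unfolding t_def by auto
      have det: "(b - q) * r - b * (r - a) = 1" using q(1) by (simp add: algebra_simps)
      have "ceil_step r b (tau r a i + 1) = ceil_step (r - a) (b - q) (t + 1)"
        using tau_left[OF a True] ceil_step_eq_of_det[OF _ _ det] t a unfolding t_def by simp
      also have "\<dots> = ceil_step (r - a) (b - q) (i mod (r - a))"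
        unfolding t_def using 1(1)[OF rec True adm_left _ _ _ _ inv_left] q a by simp
      also have "\<dots> = ceil_step (r - a) (b - q) i"
        using q by (intro ceil_step_cong) auto
      also have "\<dots> = ceil_step r b i"
        using ceil_step_eq_of_det[OF _ _ det] True 1(5) a by simp
      finally show ?thesis .
    next
      case False
      define t where "t = tau a ((- r) mod a) i"
      have adm_right: "admissible a ((- r) mod a)" using admissible_right 1(3) adm by blast
      have t: "0 \<le> t" "t < a" using tau_range[OF adm_right] False 1(4) unfolding t_def by auto
      have det: "b * a - q * r = 1" using q(1) by (simp add: algebra_simps)
      have "tau r a i + 1 = (t + 1 - a) + 1 * r"
        using tau_right[OF a] False unfolding t_def by simp
      then have "(tau r a i + 1) mod r = (t + 1 - a) mod r" by (simp only: mod_mult_self1)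
      then have "ceil_step r b (tau r a i + 1) = ceil_step r b (t + 1 - a)"
        using 1(6,7) by (intro ceil_step_cong) auto
      also have "\<dots> = ceil_step a q (t + 1 - a)"
        using ceil_step_eq_of_det[OF _ _ det] t a by simp
      also have "\<dots> = ceil_step a q (t + 1)"
        using q by (intro ceil_step_cong) auto
      also have "\<dots> = ceil_step a q i"
        unfolding t_def using 1(2)[OF rec False adm_right _ _ _ _ inv_right] 1(4) False q by simp
      also have "\<dots> = ceil_step r b i"
        using ceil_step_eq_of_det[OF _ _ det] False 1(4) a by simp
      finally show ?thesis .
    qed
  qed
qed

lemma sum_ceil_step_succ:
  assumes "0 < r" "0 \<le> k"
  shows "(\<Sum>j\<in>{0..<k}. ceil_step r b (j + 1)) = ceil_div (k * b) r"
  using assms(2)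
proof (induction k rule: int_ge_induct)
  case base
  show ?case by (simp add: ceil_div_def)
next
  case (step k)
  then have "{0..<k + 1} = insert k {0..<k}" by auto
  then show ?case using step.IH by (simp add: ceil_step_def)
qed

lemma sum_if_less_cutoff:
  fixes g :: "int \<Rightarrow> 'b::comm_monoid_add"
  assumes "0 \<le> k" "k \<le> r"
  shows "(\<Sum>j\<in>{0..<r}. if j < k then g j else 0) = (\<Sum>j\<in>{0..<k}. g j)"
proof -
  have "{j \<in> {0..<r}. j < k} = {0..<k}" using assms by auto
  then show ?thesis by (simp flip: sum.inter_filter)
qed

lemma sum_multiples_mod:
  fixes f :: "int \<Rightarrow> int"
  assumes b: "0 < b" "b < r" and inv: "(a * b) mod r = 1"
  shows "(\<Sum>m\<in>{1..b}. f ((m * a) mod r)) = (\<Sum>x\<in>{0..<r}. ceil_step r b x * f x)"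
proof -
  have r: "0 < r" using b by simp
  have inv_mod: "((y * c) mod r * d) mod r = (y * (c * d)) mod r" for y c d :: int
    by (simp add: mod_mult_left_eq mult.assoc)
  have "(\<Sum>m\<in>{1..b}. f ((m * a) mod r)) = (\<Sum>x\<in>{x \<in> {0..<r}. (x * b - 1) mod r < b}. f x)"
  proof (rule sum.reindex_bij_witness[where j = "\<lambda>m. (m * a) mod r" and i = "\<lambda>x. (x * b - 1) mod r + 1"])
    fix m assume m: "m \<in> {1..b}"
    have "((m * a) mod r * b - 1) mod r = (m * (a * b) - 1) mod r"
      by (metis inv_mod mod_diff_left_eq)
    also have "\<dots> = (m * ((a * b) mod r) - 1) mod r"
      by (metis mod_diff_left_eq mod_mult_right_eq)
    also have "\<dots> = m - 1" using m b inv by simp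
    finally have "((m * a) mod r * b - 1) mod r = m - 1" .
    then show "((m * a) mod r * b - 1) mod r + 1 = m"
      and "(m * a) mod r \<in> {x \<in> {0..<r}. (x * b - 1) mod r < b}"
      using m r by auto
  next
    fix x assume x: "x \<in> {x \<in> {0..<r}. (x * b - 1) mod r < b}"
    have "(((x * b - 1) mod r + 1) * a) mod r = ((x * b - 1 + 1) * a) mod r"
      by (metis mod_add_left_eq mod_mult_left_eq)
    also have "\<dots> = (x * ((a * b) mod r)) mod r"
      by (simp add: mod_mult_right_eq algebra_simps)
    also have "\<dots> = x" using x inv by simp
    finally show "(((x * b - 1) mod r + 1) * a) mod r = x" .
    show "(x * b - 1) mod r + 1 \<in> {1..b}" using x r by auto
  qed simp
  also have "\<dots> = (\<Sum>x\<in>{0..<r}. if (x * b - 1) mod r < b then f x else 0)"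
    by (rule sum.inter_filter) simp
  also have "\<dots> = (\<Sum>x\<in>{0..<r}. ceil_step r b x * f x)"
    using b by (intro sum.cong) (auto simp: ceil_step_eq)
  finally show ?thesis .
qed

lemma sum_tau_less:
  assumes "admissible r a" "0 \<le> k" "k \<le> r"
  shows "(\<Sum>x\<in>{0..<r}. if tau r a x < k then 1 else 0 :: int) = k"
proof -
  have "(\<Sum>x\<in>{0..<r}. if tau r a x < k then 1 else 0 :: int) = (\<Sum>j\<in>{0..<r}. if j < k then 1 else 0)"
    using sum.reindex_bij_betw[OF tau_bij[OF assms(1)], of "\<lambda>j. if j < k then 1 else 0 :: int"] by simp
  also have "\<dots> = (\<Sum>j\<in>{0..<k}. 1)" using assms(2,3) by (rule sum_if_less_cutoff)
  finally show ?thesis using assms by simp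
qed

lemma sum_tau_multiples_less:
  assumes adm: "admissible r a" and b: "0 < b" "b < r" and inv: "(a * b) mod r = 1"
    and k: "0 \<le> k" "k \<le> r"
  shows "(\<Sum>m\<in>{1..b}. if tau r a ((m * a) mod r) < k then 1 else 0 :: int) = ceil_div (k * b) r"
proof -
  let ?f = "\<lambda>x. if tau r a x < k then 1 else 0 :: int"
  have "(\<Sum>m\<in>{1..b}. ?f ((m * a) mod r)) = (\<Sum>x\<in>{0..<r}. ceil_step r b x * ?f x)"
    using b inv by (rule sum_multiples_mod)
  also have "\<dots> = (\<Sum>x\<in>{0..<r}. ceil_step r b (tau r a x + 1) * ?f x)"
    using ceil_step_tau_succ[OF adm _ _ b inv] by (intro sum.cong) auto
  also have "\<dots> = (\<Sum>j\<in>{0..<r}. if j < k then ceil_step r b (j + 1) else 0)"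
    using sum.reindex_bij_betw[OF tau_bij[OF adm], of "\<lambda>j. if j < k then ceil_step r b (j + 1) else 0"]
    by (simp add: if_distrib cong: if_cong)
  also have "\<dots> = (\<Sum>j\<in>{0..<k}. ceil_step r b (j + 1))" using k by (rule sum_if_less_cutoff)
  also have "\<dots> = ceil_div (k * b) r" using b k by (intro sum_ceil_step_succ) auto
  finally show ?thesis .
qed

section \<open>Cyclic difference equations\<close>

lemma mod_mult_inverse:
  fixes r a b x :: int
  assumes "(a * b) mod r = 1"
  shows "((x * b) mod r * a) mod r = x mod r"
proof -
  have "((x * b) mod r * a) mod r = (x * ((a * b) mod r)) mod r"
    by (metis mod_mult_left_eq mod_mult_right_eq mult.assoc mult.commute)
  then show ?thesis using assms by simp
qed

lemma periodic_shift_invariant_const: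
  fixes f :: "int \<Rightarrow> 'b"
  assumes r: "0 < r" and inv: "(a * b) mod r = 1"
    and per: "\<And>i. f i = f (i mod r)" and shift: "\<And>i. f i = f (i - a)"
  shows "f i = f 0"
proof -
  have multiples: "f (int n * a) = f 0" for n
  proof (induction n)
    case (Suc n)
    have "f (int (Suc n) * a) = f (int (Suc n) * a - a)" by (rule shift)
    then show ?case using Suc by (simp add: algebra_simps)
  qed simp
  have "i mod r = (nat ((i * b) mod r) * a) mod r"
    using mod_mult_inverse[OF inv, of i] r by simp
  then show ?thesis using per[of i] per[of "nat ((i * b) mod r) * a"] multiples by metis
qed

lemma sum_periodic_reindex:
  fixes g :: "int \<Rightarrow> 'b::comm_monoid_add"
  assumes r: "0 < r" and per: "\<And>i. g i = g (i mod r)" and h: "bij_betw (\<lambda>x. h x mod r) {0..<r} {0..<r}"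
  shows "(\<Sum>x\<in>{0..<r}. g (h x)) = (\<Sum>x\<in>{0..<r}. g x)"
  using sum.reindex_bij_betw[OF h, of g] per by simp

lemma bij_betw_mult_mod:
  fixes r a b :: int
  assumes r: "0 < r" and inv: "(a * b) mod r = 1"
  shows "bij_betw (\<lambda>m. (m * a) mod r) {0..<r} {0..<r}"
proof (rule bij_betw_byWitness[where f' = "\<lambda>x. (x * b) mod r"])
  have inv': "(b * a) mod r = 1" using inv by (simp add: mult.commute)
  show "\<forall>m\<in>{0..<r}. ((m * a) mod r * b) mod r = m"
    using mod_mult_inverse[OF inv'] by simp
  show "\<forall>x\<in>{0..<r}. ((x * b) mod r * a) mod r = x"
    using mod_mult_inverse[OF inv] by simp
qed (use r in auto)

lemma bij_betw_add_mod:
  fixes r c :: int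
  assumes "0 < r"
  shows "bij_betw (\<lambda>x. (x + c) mod r) {0..<r} {0..<r}"
  by (rule bij_betw_byWitness[where f' = "\<lambda>y. (y - c) mod r"])
    (use assms in \<open>auto simp: mod_diff_left_eq mod_add_left_eq\<close>)

text \<open>With b inverse to a modulo r, every i is congruent to \<open>n a\<close> for \<open>n = \<langle>i b\<rangle>_r\<close>; the solution
  is obtained by summing g along \<open>a, 2 a, \<dots>, n a\<close>.\<close>

definition cyclic_solution :: "int \<Rightarrow> int \<Rightarrow> int \<Rightarrow> 'b::ab_group_add \<Rightarrow> (int \<Rightarrow> 'b) \<Rightarrow> int \<Rightarrow> 'b" where
  "cyclic_solution r a b c g i = c + (\<Sum>m\<in>{1..(i * b) mod r}. g (m * a))"

lemma cyclic_solution_mod: "cyclic_solution r a b c g (i mod r) = cyclic_solution r a b c g i"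
  by (simp add: cyclic_solution_def mod_mult_left_eq)

lemma cyclic_solution_zero: "cyclic_solution r a b c g 0 = c"
  by (simp add: cyclic_solution_def)

lemma cyclic_solution_diff:
  fixes g :: "int \<Rightarrow> 'b::ab_group_add"
  assumes r: "0 < r" and inv: "(a * b) mod r = 1"
    and per: "\<And>i. g i = g (i mod r)" and total: "(\<Sum>x\<in>{0..<r}. g x) = 0"
  shows "cyclic_solution r a b c g i - cyclic_solution r a b c g (i - a) = g i"
proof -
  define n where "n = (i * b) mod r"
  have n: "0 \<le> n" "n < r" using r unfolding n_def by auto
  have "((i - a) * b) mod r = ((i * b) mod r - (a * b) mod r) mod r"
    by (simp add: left_diff_distrib mod_diff_eq)
  then have prev: "((i - a) * b) mod r = (n - 1) mod r" using inv unfolding n_def by simp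
  have "(n * a) mod r = i mod r" unfolding n_def by (rule mod_mult_inverse[OF inv])
  then have gi: "g (n * a) = g i" using per[of "n * a"] per[of i] by simp
  show ?thesis
  proof (cases "n = 0")
    case False
    then have "{1..n} = insert n {1..n - 1}" using n by auto
    moreover have "((i - a) * b) mod r = n - 1" using prev n False by simp
    ultimately show ?thesis using gi by (simp add: cyclic_solution_def flip: n_def)
  next
    case True
    have "(\<Sum>m\<in>{0..<r}. g (m * a)) = 0"
      using sum_periodic_reindex[where g = g and h = "\<lambda>m. m * a", OF r per bij_betw_mult_mod[OF r inv]] total
      by simp
    moreover have "{0..<r} = insert 0 {1..r - 1}" using r by auto
    ultimately have "(\<Sum>m\<in>{1..r - 1}. g (m * a)) = - g (0 * a)"
      by (simp add: add_eq_0_iff)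
    moreover have "((i - a) * b) mod r = r - 1" using prev True r by (simp add: zmod_minus1)
    ultimately show ?thesis using gi True by (simp add: cyclic_solution_def flip: n_def)
  qed
qed

lemma The_cyclic_solution:
  fixes g :: "int \<Rightarrow> 'b::ab_group_add"
  assumes r: "0 < r" and inv: "(a * b) mod r = 1"
    and per: "\<And>i. g i = g (i mod r)" and total: "(\<Sum>x\<in>{0..<r}. g x) = 0"
  shows "(THE F. (\<forall>i. F i = F (i mod r)) \<and> F 0 = c \<and> (\<forall>i. F i - F (i - a) = g i))
    = cyclic_solution r a b c g"
proof (rule the_equality)
  show "(\<forall>i. cyclic_solution r a b c g i = cyclic_solution r a b c g (i mod r)) \<and>
      cyclic_solution r a b c g 0 = c \<and>
      (\<forall>i. cyclic_solution r a b c g i - cyclic_solution r a b c g (i - a) = g i)"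
    by (simp add: cyclic_solution_mod cyclic_solution_zero cyclic_solution_diff[OF assms])
next
  fix F assume "(\<forall>i. F i = F (i mod r)) \<and> F 0 = c \<and> (\<forall>i. F i - F (i - a) = g i)"
  then have F_per: "F i = F (i mod r)" and F_zero: "F 0 = c" and F_diff: "F i - F (i - a) = g i" for i
    by blast+
  let ?E = "\<lambda>i. F i - cyclic_solution r a b c g i"
  have E_const: "?E i = ?E 0" for i
  proof (rule periodic_shift_invariant_const[OF r inv])
    show "?E i = ?E (i mod r)" for i using F_per[of i] cyclic_solution_mod[of r a b c g i] by simp
    show "?E i = ?E (i - a)" for i
      using F_diff[of i] cyclic_solution_diff[OF assms, of c i] by (simp add: algebra_simps)
  qed
  show "F = cyclic_solution r a b c g"
  proof
    fix i
    show "F i = cyclic_solution r a b c g i"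
      using E_const[of i] F_zero cyclic_solution_zero[of r a b c g] by simp
  qed
qed

section \<open>The divisors\<close>

lemma binv_mod:
  assumes "1 < r" "coprime r a"
  shows "0 < binv r a mod r" "binv r a mod r < r" "(a * (binv r a mod r)) mod r = 1"
proof -
  have "\<exists>x. [a * x = 1] (mod r)"
    using assms cong_solve_coprime_int by (simp add: coprime_commute)
  then have "[a * binv r a = 1] (mod r)" unfolding binv_def by (rule someI_ex)
  then show inv: "(a * (binv r a mod r)) mod r = 1"
    using assms by (simp add: cong_def mod_mult_right_eq)
  show "binv r a mod r < r" using assms by simp
  have "binv r a mod r \<noteq> 0" using inv by auto
  then show "0 < binv r a mod r" using assms
    by (metis order_le_less pos_mod_sign zero_less_one order.strict_trans)
qed

lemma sum_fun_apply: "(\<Sum>x\<in>A. f x) \<rho> = (\<Sum>x\<in>A. f x \<rho>)"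
  by (induction A rule: infinite_finite_induct) auto

lemma Zdiv_mod: "Zdiv r a (i mod r) = Zdiv r a i"
  by (simp add: Zdiv_def)

lemma Zdiv_apply:
  "Zdiv r a i RE1 = 0"
  "Zdiv r a i (RD k) = (if tau r a (i mod r) < k \<and> k \<le> r then 1 else 0)"
  unfolding Zdiv_def sum_fun_apply prime_div_def by auto

lemma DZdiv_apply:
  "DZdiv r a RE1 = 0"
  "DZdiv r a (RD k) = (if 0 \<le> k \<and> k \<le> r then of_int k / of_int r else 0)"
  unfolding DZdiv_def sum_fun_apply prime_div_def smul_def e3star_def pt_def
  by (simp_all add: if_distrib sum.delta cong: if_cong)

lemma DXdiv_apply:
  "DXdiv r a RE1 = 1"
  "DXdiv r a (RD k) = (if 0 \<le> k \<and> k \<le> r then of_int ((- k * binv r a) mod r) / of_int r else 0)"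
  unfolding DXdiv_def sum_fun_apply prime_div_def smul_def e1star_def pt_def
  by (simp_all add: if_distrib sum.delta cong: if_cong)

lemma Zdiv_apply_in_range:
  assumes "admissible r a" "0 \<le> k" "k \<le> r"
  shows "Zdiv r a i (RD k) = (if tau r a (i mod r) < k then 1 else 0)"
  using assms by (simp add: Zdiv_apply)

lemma Zdiv_apply_out_of_range:
  assumes "admissible r a" "\<not> (0 \<le> k \<and> k \<le> r)"
  shows "Zdiv r a i (RD k) = 0"
proof -
  have "0 \<le> tau r a (i mod r)"
    using tau_range[OF assms(1), of "i mod r"] assms(1) unfolding admissible_def by auto
  then show ?thesis using assms(2) by (auto simp: Zdiv_apply)
qed

lemma sum_Zdiv_period:
  assumes "admissible r a"
  shows "(\<Sum>x\<in>{0..<r}. Zdiv r a x (RD k)) = (if 0 \<le> k \<and> k \<le> r then k else 0)"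
proof (cases "0 \<le> k \<and> k \<le> r")
  case True
  then have "(\<Sum>x\<in>{0..<r}. Zdiv r a x (RD k)) = (\<Sum>x\<in>{0..<r}. if tau r a x < k then 1 else 0)"
    using assms by (intro sum.cong) (auto simp: Zdiv_apply_in_range)
  then show ?thesis using sum_tau_less[OF assms] True by simp
next
  case False
  then show ?thesis by (auto simp: Zdiv_apply_out_of_range[OF assms False])
qed

lemma sum_Zdiv_multiples:
  assumes "admissible r a" "0 < b" "b < r" "(a * b) mod r = 1"
  shows "(\<Sum>m\<in>{1..b}. Zdiv r a (m * a) (RD k)) = (if 0 \<le> k \<and> k \<le> r then ceil_div (k * b) r else 0)"
proof (cases "0 \<le> k \<and> k \<le> r")
  case True
  then have "(\<Sum>m\<in>{1..b}. Zdiv r a (m * a) (RD k)) = (\<Sum>m\<in>{1..b}. if tau r a ((m * a) mod r) < k then 1 else 0)"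
    using assms by (intro sum.cong) (auto simp: Zdiv_apply_in_range)
  then show ?thesis using sum_tau_multiples_less[OF assms] True by simp
next
  case False
  then show ?thesis by (auto simp: Zdiv_apply_out_of_range[OF assms(1) False])
qed

lemma qdiv_of_diff: "qdiv_of (X - Y) = qdiv_of X - qdiv_of Y"
  by (simp add: qdiv_of_def fun_eq_iff)

lemma qdiv_of_E1: "qdiv_of E1 = E1"
  by (simp add: qdiv_of_def prime_div_def fun_eq_iff)

lemma Zdiv_excess_period_sum:
  assumes adm: "admissible r a"
  shows "(\<Sum>x\<in>{0..<r}. qdiv_of (Zdiv r a x) - DZdiv r a) = 0"
proof
  fix \<rho>
  show "(\<Sum>x\<in>{0..<r}. qdiv_of (Zdiv r a x) - DZdiv r a) \<rho> = 0 \<rho>"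
  proof (cases \<rho>)
    case RE1
    then show ?thesis by (simp add: sum_fun_apply qdiv_of_def Zdiv_apply DZdiv_apply)
  next
    case (RD k)
    have "r \<noteq> 0" using adm unfolding admissible_def by simp
    have "(\<Sum>x\<in>{0..<r}. qdiv_of (Zdiv r a x) - DZdiv r a) \<rho>
        = of_int (\<Sum>x\<in>{0..<r}. Zdiv r a x (RD k)) - of_int r * DZdiv r a (RD k)"
      unfolding sum_fun_apply using adm unfolding admissible_def
      by (simp add: RD qdiv_of_def sum_subtractf)
    then show ?thesis using \<open>r \<noteq> 0\<close> by (simp add: sum_Zdiv_period[OF adm] DZdiv_apply)
  qed
qed

lemma Zdiv_increment_period_sum:
  assumes "0 < r"
  shows "(\<Sum>x\<in>{0..<r}. Zdiv r a x - Zdiv r a (x + 1)) = 0"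
proof -
  have "(\<Sum>x\<in>{0..<r}. Zdiv r a (x + 1)) = (\<Sum>x\<in>{0..<r}. Zdiv r a x)"
    using sum_periodic_reindex[where g = "Zdiv r a" and h = "\<lambda>x. x + 1", OF assms _ bij_betw_add_mod[OF assms]]
    by (simp add: Zdiv_mod)
  then show ?thesis by (simp add: sum_subtractf)
qed

lemma Rdiv_eq_cyclic_solution:
  assumes adm: "admissible r a" and r: "1 < r"
  shows "Rdiv r a = cyclic_solution r a (binv r a mod r) 0 (\<lambda>i. qdiv_of (Zdiv r a i) - DZdiv r a)"
proof -
  have "Rdiv r a = (THE R. (\<forall>i. R i = R (i mod r)) \<and> R 0 = 0 \<and>
      (\<forall>i. R i - R (i - a) = qdiv_of (Zdiv r a i) - DZdiv r a))"
    unfolding Rdiv_def by (rule arg_cong[where f = The]) (auto simp: fun_eq_iff algebra_simps)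
  also have "\<dots> = cyclic_solution r a (binv r a mod r) 0 (\<lambda>i. qdiv_of (Zdiv r a i) - DZdiv r a)"
    using adm r binv_mod(3) Zdiv_excess_period_sum[OF adm] unfolding admissible_def
    by (intro The_cyclic_solution) (auto simp: Zdiv_mod)
  finally show ?thesis .
qed

lemma Xdiv_eq_cyclic_solution:
  assumes adm: "admissible r a" and r: "1 < r"
  shows "Xdiv r a = cyclic_solution r a (binv r a mod r) E1 (\<lambda>i. Zdiv r a i - Zdiv r a (i + 1))"
proof -
  have "Xdiv r a = (THE X. (\<forall>i. X i = X (i mod r)) \<and> X 0 = E1 \<and>
      (\<forall>i. X i - X (i - a) = Zdiv r a i - Zdiv r a (i + 1)))"
    unfolding Xdiv_def by (rule arg_cong[where f = The]) (auto simp: fun_eq_iff algebra_simps)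
  also have "\<dots> = cyclic_solution r a (binv r a mod r) E1 (\<lambda>i. Zdiv r a i - Zdiv r a (i + 1))"
    using adm r binv_mod(3) Zdiv_increment_period_sum[of r a] unfolding admissible_def
    by (intro The_cyclic_solution) (auto simp: Zdiv_def mod_add_left_eq)
  finally show ?thesis .
qed

lemma Xdiv_recurrence:
  assumes "admissible r a" "1 < r"
  shows "Xdiv r a (i mod r) = Xdiv r a i"
    and "Xdiv r a 0 = E1"
    and "Xdiv r a i - Xdiv r a (i - a) = Zdiv r a i - Zdiv r a (i + 1)"
proof -
  have r: "0 < r" and inv: "(a * (binv r a mod r)) mod r = 1"
    using assms binv_mod unfolding admissible_def by auto
  have per: "Zdiv r a i - Zdiv r a (i + 1) = Zdiv r a (i mod r) - Zdiv r a (i mod r + 1)" for i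
    by (simp add: Zdiv_def mod_add_left_eq)
  show "Xdiv r a i - Xdiv r a (i - a) = Zdiv r a i - Zdiv r a (i + 1)"
    unfolding Xdiv_eq_cyclic_solution[OF assms]
    using r inv per Zdiv_increment_period_sum[OF r] by (rule cyclic_solution_diff)
qed (simp_all add: Xdiv_eq_cyclic_solution[OF assms] cyclic_solution_mod cyclic_solution_zero)

lemma Rdiv_recurrence:
  assumes "admissible r a" "1 < r"
  shows "Rdiv r a (i mod r) = Rdiv r a i"
    and "Rdiv r a 0 = 0"
    and "Rdiv r a i - Rdiv r a (i - a) = qdiv_of (Zdiv r a i) - DZdiv r a"
proof -
  have "0 < r" "(a * (binv r a mod r)) mod r = 1" using assms binv_mod unfolding admissible_def by auto
  then show "Rdiv r a i - Rdiv r a (i - a) = qdiv_of (Zdiv r a i) - DZdiv r a"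
    unfolding Rdiv_eq_cyclic_solution[OF assms]
    by (rule cyclic_solution_diff) (auto simp: Zdiv_mod Zdiv_excess_period_sum[OF assms(1)])
qed (simp_all add: Rdiv_eq_cyclic_solution[OF assms] cyclic_solution_mod cyclic_solution_zero)

lemma Rdiv_one:
  assumes adm: "admissible r a" and r: "1 < r"
  shows "Rdiv r a 1 = DXdiv r a - E1"
proof
  fix \<rho>
  define b where "b = binv r a mod r"
  have b: "0 < b" "b < r" "(a * b) mod r = 1"
    using binv_mod[OF r] adm unfolding b_def admissible_def by auto
  have "Rdiv r a 1 \<rho> = (\<Sum>m\<in>{1..b}. qdiv_of (Zdiv r a (m * a)) \<rho> - DZdiv r a \<rho>)"
    using b unfolding Rdiv_eq_cyclic_solution[OF adm r] cyclic_solution_def sum_fun_apply b_def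
    by simp
  also have "\<dots> = (DXdiv r a - E1) \<rho>"
  proof (cases \<rho>)
    case RE1
    then show ?thesis by (simp add: qdiv_of_def Zdiv_apply DZdiv_apply DXdiv_apply prime_div_def)
  next
    case (RD k)
    have "(\<Sum>m\<in>{1..b}. qdiv_of (Zdiv r a (m * a)) \<rho> - DZdiv r a \<rho>)
        = of_int (\<Sum>m\<in>{1..b}. Zdiv r a (m * a) (RD k)) - of_int b * DZdiv r a (RD k)"
      using b by (simp add: RD qdiv_of_def sum_subtractf)
    also have "\<dots> = (if 0 \<le> k \<and> k \<le> r then of_int ((- k * b) mod r) / of_int r else 0)"
      using b of_int_ceil_div[of r "k * b"]
      by (simp add: sum_Zdiv_multiples[OF adm b] DZdiv_apply field_simps)
    also have "(- k * b) mod r = (- k * binv r a) mod r"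
      unfolding b_def by (rule mod_mult_right_eq)
    finally show ?thesis using RD by (simp add: DXdiv_apply prime_div_def)
  qed
  finally show "Rdiv r a 1 \<rho> = (DXdiv r a - E1) \<rho>" .
qed

theorem mainTheorem7:
  fixes r a :: int
  assumes "1 < r" and "0 < a" and "a < r" and "coprime r a"
  shows "\<forall>i\<in>{0..<r}. qdiv_of (Xdiv r a i) = DXdiv r a + Rdiv r a i - Rdiv r a ((i + 1) mod r)"
proof -
  have adm: "admissible r a" using assms unfolding admissible_def by auto
  note X = Xdiv_recurrence[OF adm assms(1)] and R = Rdiv_recurrence[OF adm assms(1)]
  let ?D = "\<lambda>i. qdiv_of (Xdiv r a i) - (DXdiv r a + Rdiv r a i - Rdiv r a (i + 1))"
  have const: "?D i = ?D 0" for i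
  proof (rule periodic_shift_invariant_const)
    show "0 < r" "(a * (binv r a mod r)) mod r = 1" using assms binv_mod by auto
    show "?D i = ?D (i mod r)" for i
      using X(1)[of i] R(1)[of i] R(1)[of "i + 1"] R(1)[of "i mod r + 1"] by (simp add: mod_add_left_eq)
    show "?D i = ?D (i - a)" for i
    proof -
      have "?D i - ?D (i - a) = qdiv_of (Xdiv r a i - Xdiv r a (i - a))
          - (Rdiv r a i - Rdiv r a (i - a)) + (Rdiv r a (i + 1) - Rdiv r a (i + 1 - a))"
        by (simp add: qdiv_of_diff algebra_simps)
      also have "\<dots> = 0"
        unfolding X(3) R(3) qdiv_of_diff by simp
      finally show ?thesis unfolding right_minus_eq .
    qed
  qed
  have zero: "?D 0 = 0"
    using X(2) R(2) Rdiv_one[OF adm assms(1)] by (simp add: qdiv_of_E1)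
  show ?thesis
  proof
    fix i
    have "?D i = 0" using const[of i] zero by (rule trans)
    then show "qdiv_of (Xdiv r a i) = DXdiv r a + Rdiv r a i - Rdiv r a ((i + 1) mod r)"
      unfolding R(1) right_minus_eq .
  qed
qed

end
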